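(* The compactness theorem holds for propositional team logic $\mathrm{PTL}$.
   Context: $\mathrm{PTL}$ is the closure of propositional logic $\mathrm{PL}$ under the strong negation $\sim$, the material implication (written here $\varphi\Rightarrow\psi$, true in a team iff the team falsifies $\varphi$ or satisfies $\psi$) and the linear implication $\multimap$, interpreted on teams $T$ of propositional assignments: a classical formula holds in $T$ iff it holds for every assignment in $T$; $T\models\sim\varphi$ iff $T\not\models\varphi$; $T\models\varphi\multimap\psi$ iff for all $S,U$ with $S\cup U=T$ (lax splitting), $S\models\varphi$ implies $U\models\psi$. It is a consequence of the soundness and completeness of the Hilbert-style system $\mathsf{H}^0\mathsf{L}\mathsf{S}$ for $\mathrm{PTL}$. *)

theory Defs
  imports Main
begin

type_synonym assignment = "nat \<Rightarrow> bool"
type_synonym team = "assignment set"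

datatype pl = PVar nat | PBot | PNeg pl | PConj pl pl | PDisj pl pl

fun pl_sat :: "assignment \<Rightarrow> pl \<Rightarrow> bool" where
  "pl_sat s (PVar p) = s p"
| "pl_sat s PBot = False"
| "pl_sat s (PNeg a) = (\<not> pl_sat s a)"
| "pl_sat s (PConj a b) = (pl_sat s a \<and> pl_sat s b)"
| "pl_sat s (PDisj a b) = (pl_sat s a \<or> pl_sat s b)"

datatype ptl = Cl pl | SNeg ptl | MImp ptl ptl | LImp ptl ptl

fun team_sat :: "team \<Rightarrow> ptl \<Rightarrow> bool" where
  "team_sat T (Cl a) = (\<forall>s\<in>T. pl_sat s a)"
| "team_sat T (SNeg f) = (\<not> team_sat T f)"
| "team_sat T (MImp f g) = (\<not> team_sat T f \<or> team_sat T g)"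
| "team_sat T (LImp f g) = (\<forall>S U. S \<union> U = T \<longrightarrow> team_sat S f \<longrightarrow> team_sat U g)"

definition ptl_entails :: "ptl set \<Rightarrow> ptl \<Rightarrow> bool" where
  "ptl_entails \<Gamma> \<phi> \<longleftrightarrow> (\<forall>T. (\<forall>\<psi>\<in>\<Gamma>. team_sat T \<psi>) \<longrightarrow> team_sat T \<phi>)"

end

theory Submission
  imports Defs
begin

text \<open>A PTL formula only sees the variables occurring in it, so whether a team satisfies it
  depends only on the restriction of the team to finitely many variables, and there are only
  finitely many such restricted teams. Consequently the formulas of \<Gamma> with variables below m
  are equivalent to finitely many of them, and finite satisfiability yields, for every m, a
  counter-model to \<phi> for this part of \<Gamma>. A Koenig-style argument then selects restricted teams
  A n, coherent under further restriction and each realised by counter-models for every m;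
  the inverse limit of the A n is a counter-model to \<phi> for all of \<Gamma>.\<close>

definition restrict_vars :: "nat \<Rightarrow> assignment \<Rightarrow> assignment" where
  "restrict_vars n s = (\<lambda>i. i < n \<and> s i)"

fun pl_var_bound :: "pl \<Rightarrow> nat" where
  "pl_var_bound (PVar p) = Suc p"
| "pl_var_bound PBot = 0"
| "pl_var_bound (PNeg a) = pl_var_bound a"
| "pl_var_bound (PConj a b) = max (pl_var_bound a) (pl_var_bound b)"
| "pl_var_bound (PDisj a b) = max (pl_var_bound a) (pl_var_bound b)"

fun ptl_var_bound :: "ptl \<Rightarrow> nat" where
  "ptl_var_bound (Cl a) = pl_var_bound a"
| "ptl_var_bound (SNeg f) = ptl_var_bound f"
| "ptl_var_bound (MImp f g) = max (ptl_var_bound f) (ptl_var_bound g)"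
| "ptl_var_bound (LImp f g) = max (ptl_var_bound f) (ptl_var_bound g)"

lemma restrict_vars_restrict_vars [simp]:
  "restrict_vars m (restrict_vars n s) = restrict_vars (min m n) s"
  by (auto simp: restrict_vars_def fun_eq_iff)

lemma restrict_vars_image_idem [simp]:
  "restrict_vars n ` restrict_vars n ` T = restrict_vars n ` T"
  by (simp add: image_image)

lemma finite_range_restrict_vars: "finite (range (restrict_vars n))"
proof (rule finite_subset)
  show "range (restrict_vars n) \<subseteq> (\<lambda>P i. i \<in> P) ` Pow {..<n}"
  proof
    fix t assume "t \<in> range (restrict_vars n)"
    then obtain s where "t = restrict_vars n s" by blast
    then have "t = (\<lambda>i. i \<in> {i. i < n \<and> s i})" by (simp add: restrict_vars_def)
    then show "t \<in> (\<lambda>P i. i \<in> P) ` Pow {..<n}" by blast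
  qed
qed simp

lemma finite_restricted_teams: "finite ((`) (restrict_vars n) ` X)"
  by (rule finite_subset[of _ "Pow (range (restrict_vars n))"])
     (auto simp: finite_range_restrict_vars)

lemma pl_sat_restrict_vars:
  "pl_var_bound a \<le> n \<Longrightarrow> pl_sat (restrict_vars n s) a = pl_sat s a"
  by (induction a) (auto simp: restrict_vars_def)

lemma image_Collect_image_mem:
  assumes "f ` S \<subseteq> f ` T"
  shows "f ` {t \<in> T. f t \<in> f ` S} = f ` S"
proof
  show "f ` S \<subseteq> f ` {t \<in> T. f t \<in> f ` S}"
  proof
    fix y assume y: "y \<in> f ` S"
    with assms have "y \<in> f ` T" by (rule subsetD)
    then obtain t where t: "y = f t" "t \<in> T" by (rule imageE)
    with y have "t \<in> {t \<in> T. f t \<in> f ` S}" by simp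
    with t(1) show "y \<in> f ` {t \<in> T. f t \<in> f ` S}" by (rule image_eqI)
  qed
qed auto

lemma union_split_transfer:
  assumes "f ` T = f ` T'" "S \<union> U = T'"
  obtains S' U' where "S' \<union> U' = T" "f ` S' = f ` S" "f ` U' = f ` U"
proof
  have cover: "f ` T = f ` S \<union> f ` U"
    using assms(1) by (simp add: image_Un flip: assms(2))
  then show "{t \<in> T. f t \<in> f ` S} \<union> {t \<in> T. f t \<in> f ` U} = T"
    by blast
  show "f ` {t \<in> T. f t \<in> f ` S} = f ` S" "f ` {t \<in> T. f t \<in> f ` U} = f ` U"
    using cover by (simp_all add: image_Collect_image_mem)
qed

lemma team_sat_eq_if_restrict_vars_eq:
  assumes "restrict_vars n ` T = restrict_vars n ` T'" "ptl_var_bound \<phi> \<le> n"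
  shows "team_sat T \<phi> = team_sat T' \<phi>"
  using assms
proof (induction \<phi> arbitrary: T T')
  case (Cl a)
  have "team_sat X (Cl a) = (\<forall>t\<in>restrict_vars n ` X. pl_sat t a)" for X
    using pl_sat_restrict_vars[of a n] Cl.prems(2) by auto
  then show ?case by (simp only: Cl.prems(1))
next
  case (SNeg f)
  show ?case using SNeg.IH[OF SNeg.prems(1)] SNeg.prems(2) by simp
next
  case (MImp f g)
  show ?case using MImp.IH[OF MImp.prems(1)] MImp.prems(2) by simp
next
  case (LImp f g)
  have *: "team_sat B (LImp f g)"
    if eq: "restrict_vars n ` A = restrict_vars n ` B" and A: "team_sat A (LImp f g)" for A B
  proof (unfold team_sat.simps, intro allI impI)
    fix S U assume split: "S \<union> U = B" and S: "team_sat S f"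
    obtain S' U' where "S' \<union> U' = A"
      and S': "restrict_vars n ` S' = restrict_vars n ` S"
      and U': "restrict_vars n ` U' = restrict_vars n ` U"
      using union_split_transfer[OF eq split] by blast
    moreover have "team_sat S' f"
      using LImp.IH(1)[OF S'] LImp.prems(2) S by simp
    ultimately have "team_sat U' g"
      using A by simp
    then show "team_sat U g"
      using LImp.IH(2)[OF U'] LImp.prems(2) by simp
  qed
  show ?case using *[OF LImp.prems(1)] *[OF LImp.prems(1)[symmetric]] by blast
qed

lemma team_sat_restrict_vars:
  "ptl_var_bound \<phi> \<le> n \<Longrightarrow> team_sat (restrict_vars n ` T) \<phi> = team_sat T \<phi>"
  by (rule team_sat_eq_if_restrict_vars_eq) simp_all

text \<open>Pick one falsified formula for each of the finitely many restricted teams that falsify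
  some member.\<close>
lemma bounded_formulas_finitely_axiomatized:
  "\<exists>\<Gamma>0 \<subseteq> {\<psi> \<in> \<Gamma>. ptl_var_bound \<psi> \<le> m}. finite \<Gamma>0 \<and>
     (\<forall>T. (\<forall>\<psi>\<in>\<Gamma>0. team_sat T \<psi>) \<longrightarrow> (\<forall>\<psi>\<in>\<Gamma>. ptl_var_bound \<psi> \<le> m \<longrightarrow> team_sat T \<psi>))"
proof -
  let ?\<Gamma>m = "{\<psi> \<in> \<Gamma>. ptl_var_bound \<psi> \<le> m}"
  let ?Bad = "{A \<in> (`) (restrict_vars m) ` UNIV. \<exists>\<psi>\<in>?\<Gamma>m. \<not> team_sat A \<psi>}"
  have "\<forall>A\<in>?Bad. \<exists>\<psi>. \<psi> \<in> ?\<Gamma>m \<and> \<not> team_sat A \<psi>"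
    by blast
  from bchoice[OF this] obtain w where w: "\<forall>A\<in>?Bad. w A \<in> ?\<Gamma>m \<and> \<not> team_sat A (w A)"
    by blast
  have sat: "team_sat T \<psi>" if T: "\<forall>\<psi>\<in>w ` ?Bad. team_sat T \<psi>" and \<psi>: "\<psi> \<in> ?\<Gamma>m" for T \<psi>
  proof (rule ccontr)
    let ?A = "restrict_vars m ` T"
    assume "\<not> team_sat T \<psi>"
    then have "\<not> team_sat ?A \<psi>"
      using \<psi> team_sat_restrict_vars[of \<psi> m T] by simp
    then have bad: "?A \<in> ?Bad"
      using \<psi> by blast
    then have "\<not> team_sat ?A (w ?A)" and "ptl_var_bound (w ?A) \<le> m"
      using w by auto
    then have "\<not> team_sat T (w ?A)"
      using team_sat_restrict_vars[of "w ?A" m T] by simp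
    with T bad show False by blast
  qed
  have "finite ?Bad"
    using finite_restricted_teams[of m UNIV] by (rule finite_subset[rotated]) blast
  show ?thesis
  proof (intro exI conjI)
    show "w ` ?Bad \<subseteq> ?\<Gamma>m" using w by blast
    show "finite (w ` ?Bad)" using \<open>finite ?Bad\<close> by simp
    show "\<forall>T. (\<forall>\<psi>\<in>w ` ?Bad. team_sat T \<psi>) \<longrightarrow> (\<forall>\<psi>\<in>\<Gamma>. ptl_var_bound \<psi> \<le> m \<longrightarrow> team_sat T \<psi>)"
      using sat by blast
  qed
qed

lemma INT_antimono_finite_nonempty:
  fixes X :: "nat \<Rightarrow> 'a set"
  assumes "antimono X" "finite (X 0)" "\<And>m. X m \<noteq> {}"
  shows "(\<Inter>m. X m) \<noteq> {}"
proof
  assume "(\<Inter>m. X m) = {}"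
  then have "\<forall>x\<in>X 0. \<exists>m. x \<notin> X m" by blast
  then obtain k where k: "\<And>x. x \<in> X 0 \<Longrightarrow> x \<notin> X (k x)" by metis
  define M where "M = Max (k ` X 0)"
  have "x \<notin> X M" if "x \<in> X 0" for x
  proof -
    have "k x \<le> M" unfolding M_def using assms(2) that by simp
    then have "X M \<subseteq> X (k x)" by (rule antimonoD[OF assms(1)])
    with k[OF that] show ?thesis by blast
  qed
  moreover have "X M \<subseteq> X 0" by (rule antimonoD[OF assms(1)]) simp
  ultimately show False using assms(3)[of M] by blast
qed

lemma restrict_vars_coherent_limit:
  assumes coh: "\<And>k. restrict_vars k (f (Suc k)) = f k"
  shows "restrict_vars n (\<lambda>i. f (Suc i) i) = f n"
proof -
  have fixed: "restrict_vars k (f k) = f k" for k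
  proof -
    have "restrict_vars k (restrict_vars k (f (Suc k))) = restrict_vars k (f (Suc k))"
      by simp
    then show ?thesis by (simp only: coh)
  qed
  have down: "restrict_vars j (f (j + d)) = f j" for j d
  proof (induction d)
    case 0 show ?case using fixed by simp
  next
    case (Suc d)
    have "restrict_vars j (f (j + Suc d)) = restrict_vars j (restrict_vars (j + d) (f (Suc (j + d))))"
      by simp
    also have "\<dots> = restrict_vars j (f (j + d))" by (simp only: coh)
    finally show ?case using Suc.IH by simp
  qed
  have "f (Suc i) i = f n i" if "i < n" for i
  proof -
    have "f (Suc i) i = restrict_vars (Suc i) (f (Suc i + (n - Suc i))) i"
      by (simp only: down)
    also have "\<dots> = f n i" using that by (simp add: restrict_vars_def)
    finally show ?thesis .
  qed
  moreover have "\<not> f n i" if "\<not> i < n" for i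
    using fixed[of n] that by (metis restrict_vars_def)
  ultimately show ?thesis by (auto simp: restrict_vars_def fun_eq_iff)
qed

lemma restrict_vars_image_below:
  assumes coh: "\<And>k. restrict_vars k ` A (Suc k) = A k" and "k \<le> n"
  shows "restrict_vars k ` A n = A k"
  using \<open>k \<le> n\<close>
proof (induction n rule: dec_induct)
  case base
  have "restrict_vars k ` restrict_vars k ` A (Suc k) = restrict_vars k ` A (Suc k)"
    by (rule restrict_vars_image_idem)
  then show ?case by (simp only: coh)
next
  case (step n)
  have "restrict_vars k ` A (Suc n) = restrict_vars k ` restrict_vars n ` A (Suc n)"
    using step.hyps(1) by (simp add: image_image min_absorb1)
  also have "\<dots> = A k" by (simp only: coh step.IH)
  finally show ?case .
qed

text \<open>A form of Koenig's lemma; no finiteness is needed since the bonding maps are onto.\<close>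
lemma coherent_branch_through:
  assumes coh: "\<And>k. restrict_vars k ` A (Suc k) = A k" and a: "a \<in> A n"
  obtains f where "\<And>k. f k \<in> A k" "\<And>k. restrict_vars k (f (Suc k)) = f k" "f n = a"
proof -
  have "\<exists>f. \<forall>k. (f k \<in> A k \<and> (k \<le> n \<longrightarrow> f k = restrict_vars k a)) \<and>
               restrict_vars k (f (Suc k)) = f k"
  proof (rule dependent_nat_choice)
    have "restrict_vars 0 a \<in> A 0"
      using imageI[OF a, of "restrict_vars 0"] restrict_vars_image_below[OF coh, of 0 n] by simp
    then show "\<exists>x. x \<in> A 0 \<and> (0 \<le> n \<longrightarrow> x = restrict_vars 0 a)" by blast
  next
    fix x k assume x: "x \<in> A k \<and> (k \<le> n \<longrightarrow> x = restrict_vars k a)"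
    show "\<exists>y. (y \<in> A (Suc k) \<and> (Suc k \<le> n \<longrightarrow> y = restrict_vars (Suc k) a)) \<and>
               restrict_vars k y = x"
    proof (cases "Suc k \<le> n")
      case True
      have "restrict_vars (Suc k) a \<in> A (Suc k)"
        using imageI[OF a, of "restrict_vars (Suc k)"] restrict_vars_image_below[OF coh True]
        by simp
      moreover have "restrict_vars k (restrict_vars (Suc k) a) = x"
        using x True by simp
      ultimately show ?thesis by blast
    next
      case False
      from x have "x \<in> restrict_vars k ` A (Suc k)" by (simp add: coh)
      then obtain y where "x = restrict_vars k y" "y \<in> A (Suc k)" by (rule imageE)
      with False show ?thesis by blast
    qed
  qed
  then obtain f where f: "\<And>k. f k \<in> A k" "\<And>k. k \<le> n \<Longrightarrow> f k = restrict_vars k a"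
    "\<And>k. restrict_vars k (f (Suc k)) = f k" by blast
  from a have "a \<in> restrict_vars n ` A (Suc n)" by (simp only: coh)
  then have "restrict_vars n a = a" by auto
  with f(2)[of n] have "f n = a" by simp
  with f(1,3) show thesis by (rule that)
qed

lemma restrict_vars_inverse_limit:
  assumes coh: "\<And>k. restrict_vars k ` A (Suc k) = A k"
  shows "restrict_vars n ` {s. \<forall>k. restrict_vars k s \<in> A k} = A n"
proof
  show "A n \<subseteq> restrict_vars n ` {s. \<forall>k. restrict_vars k s \<in> A k}"
  proof
    fix a assume "a \<in> A n"
    obtain f where f: "\<And>k. f k \<in> A k" "\<And>k. restrict_vars k (f (Suc k)) = f k" "f n = a"
      using coherent_branch_through[OF coh \<open>a \<in> A n\<close>] by metis
    let ?s = "\<lambda>i. f (Suc i) i"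
    have lim: "restrict_vars k ?s = f k" for k
      by (rule restrict_vars_coherent_limit[OF f(2)])
    have "a = restrict_vars n ?s"
      using lim[of n] f(3) by simp
    moreover have "?s \<in> {s. \<forall>k. restrict_vars k s \<in> A k}"
      using lim f(1) by simp
    ultimately show "a \<in> restrict_vars n ` {s. \<forall>k. restrict_vars k s \<in> A k}"
      by (rule image_eqI)
  qed
qed auto

definition countermodels :: "ptl set \<Rightarrow> ptl \<Rightarrow> nat \<Rightarrow> team set" where
  "countermodels \<Gamma> \<phi> m =
     {T. (\<forall>\<psi>\<in>\<Gamma>. ptl_var_bound \<psi> \<le> m \<longrightarrow> team_sat T \<psi>) \<and> \<not> team_sat T \<phi>}"

definition realised_restrictions :: "ptl set \<Rightarrow> ptl \<Rightarrow> nat \<Rightarrow> team set" where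
  "realised_restrictions \<Gamma> \<phi> n = (\<Inter>m. (`) (restrict_vars n) ` countermodels \<Gamma> \<phi> m)"

lemma antimono_countermodels: "antimono (countermodels \<Gamma> \<phi>)"
  by (auto simp: antimono_def countermodels_def)

lemma INT_restricted_countermodels_nonempty:
  assumes "\<And>m. countermodels \<Gamma> \<phi> m \<inter> P \<noteq> {}"
  shows "(\<Inter>m. (`) (restrict_vars n) ` (countermodels \<Gamma> \<phi> m \<inter> P)) \<noteq> {}"
proof (rule INT_antimono_finite_nonempty)
  show "antimono (\<lambda>m. (`) (restrict_vars n) ` (countermodels \<Gamma> \<phi> m \<inter> P))"
  proof (rule antimonoI)
    fix m m' :: nat assume "m \<le> m'"
    then have "countermodels \<Gamma> \<phi> m' \<subseteq> countermodels \<Gamma> \<phi> m"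
      by (rule antimonoD[OF antimono_countermodels])
    then show "(`) (restrict_vars n) ` (countermodels \<Gamma> \<phi> m' \<inter> P)
        \<le> (`) (restrict_vars n) ` (countermodels \<Gamma> \<phi> m \<inter> P)"
      by (intro image_mono Int_mono subset_refl)
  qed
qed (simp_all add: finite_restricted_teams assms)

lemma realised_restrictions_iff:
  "A \<in> realised_restrictions \<Gamma> \<phi> n \<longleftrightarrow>
     (\<forall>m. \<exists>T\<in>countermodels \<Gamma> \<phi> m. A = restrict_vars n ` T)"
  by (simp add: realised_restrictions_def image_iff)

lemma realised_restrictions_nonempty:
  assumes "\<And>m. countermodels \<Gamma> \<phi> m \<noteq> {}"
  shows "realised_restrictions \<Gamma> \<phi> n \<noteq> {}"
  using INT_restricted_countermodels_nonempty[of \<Gamma> \<phi> UNIV n] assms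
  by (simp add: realised_restrictions_def)

lemma realised_restrictions_extend:
  assumes A: "A \<in> realised_restrictions \<Gamma> \<phi> n"
  shows "\<exists>B. B \<in> realised_restrictions \<Gamma> \<phi> (Suc n) \<and> restrict_vars n ` B = A"
proof -
  let ?P = "{T. restrict_vars n ` T = A}"
  let ?X = "\<lambda>m. (`) (restrict_vars (Suc n)) ` (countermodels \<Gamma> \<phi> m \<inter> ?P)"
  have "countermodels \<Gamma> \<phi> m \<inter> ?P \<noteq> {}" for m
    using A by (force simp: realised_restrictions_iff)
  from INT_restricted_countermodels_nonempty[where n = "Suc n", OF this]
  obtain B where "B \<in> (\<Inter>m. ?X m)" by (rule ex_in_conv[THEN iffD2, THEN exE])
  then have B: "B \<in> ?X m" for m by simp
  have "B \<in> (`) (restrict_vars (Suc n)) ` countermodels \<Gamma> \<phi> m" for m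
    by (rule subsetD[OF image_mono[OF Int_lower1] B])
  then have "B \<in> realised_restrictions \<Gamma> \<phi> (Suc n)" by (simp add: realised_restrictions_def)
  moreover obtain T where "B = restrict_vars (Suc n) ` T" "T \<in> countermodels \<Gamma> \<phi> 0 \<inter> ?P"
    using B[of 0] by (rule imageE)
  then have "restrict_vars n ` B = A" by (simp add: image_image)
  ultimately show ?thesis by blast
qed

text \<open>The inverse limit of a coherent sequence of realised restrictions.\<close>
lemma countermodel_if_bounded_countermodels:
  assumes "\<And>m. countermodels \<Gamma> \<phi> m \<noteq> {}"
  shows "\<exists>T. (\<forall>\<psi>\<in>\<Gamma>. team_sat T \<psi>) \<and> \<not> team_sat T \<phi>"
proof -
  from realised_restrictions_nonempty[OF assms]
  have "\<exists>A. A \<in> realised_restrictions \<Gamma> \<phi> 0" by (rule ex_in_conv[THEN iffD2])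
  then have "\<exists>A. \<forall>n. A n \<in> realised_restrictions \<Gamma> \<phi> n \<and> restrict_vars n ` A (Suc n) = A n"
    using realised_restrictions_extend by (rule dependent_nat_choice)
  then obtain A where A: "\<And>n. A n \<in> realised_restrictions \<Gamma> \<phi> n"
    and coh: "\<And>n. restrict_vars n ` A (Suc n) = A n"
    by blast
  define T where "T = {s. \<forall>k. restrict_vars k s \<in> A k}"
  have approx: "\<exists>T'\<in>countermodels \<Gamma> \<phi> m. restrict_vars n ` T' = restrict_vars n ` T" for n m
  proof -
    have "restrict_vars n ` T = A n"
      unfolding T_def by (rule restrict_vars_inverse_limit[OF coh])
    moreover obtain T' where "T' \<in> countermodels \<Gamma> \<phi> m" "A n = restrict_vars n ` T'"
      using A[of n] unfolding realised_restrictions_iff by blast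
    ultimately show ?thesis by auto
  qed
  have "team_sat T \<psi>" if "\<psi> \<in> \<Gamma>" for \<psi>
  proof -
    obtain T' where "T' \<in> countermodels \<Gamma> \<phi> (ptl_var_bound \<psi>)"
      and eq: "restrict_vars (ptl_var_bound \<psi>) ` T' = restrict_vars (ptl_var_bound \<psi>) ` T"
      using approx by blast
    then have "team_sat T' \<psi>" using that by (simp add: countermodels_def)
    then show ?thesis using team_sat_eq_if_restrict_vars_eq[OF eq] by simp
  qed
  moreover have "\<not> team_sat T \<phi>"
  proof -
    obtain T' where "T' \<in> countermodels \<Gamma> \<phi> 0"
      and eq: "restrict_vars (ptl_var_bound \<phi>) ` T' = restrict_vars (ptl_var_bound \<phi>) ` T"
      using approx by blast
    then have "\<not> team_sat T' \<phi>" by (simp add: countermodels_def)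
    then show ?thesis using team_sat_eq_if_restrict_vars_eq[OF eq] by simp
  qed
  ultimately show ?thesis by blast
qed

theorem mainTheorem2:
  fixes \<Gamma> :: "ptl set" and \<phi> :: ptl
  assumes "ptl_entails \<Gamma> \<phi>"
  shows "\<exists>\<Gamma>0\<subseteq>\<Gamma>. finite \<Gamma>0 \<and> ptl_entails \<Gamma>0 \<phi>"
proof (rule ccontr)
  assume no_finite: "\<not> ?thesis"
  have "countermodels \<Gamma> \<phi> m \<noteq> {}" for m
  proof -
    obtain \<Gamma>0 where sub: "\<Gamma>0 \<subseteq> {\<psi> \<in> \<Gamma>. ptl_var_bound \<psi> \<le> m}" and "finite \<Gamma>0"
      and axiomatizes: "\<forall>T. (\<forall>\<psi>\<in>\<Gamma>0. team_sat T \<psi>) \<longrightarrow>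
                              (\<forall>\<psi>\<in>\<Gamma>. ptl_var_bound \<psi> \<le> m \<longrightarrow> team_sat T \<psi>)"
      using bounded_formulas_finitely_axiomatized[of \<Gamma> m] by (elim exE conjE)
    from sub have "\<Gamma>0 \<subseteq> \<Gamma>" by blast
    with no_finite \<open>finite \<Gamma>0\<close> have "\<not> ptl_entails \<Gamma>0 \<phi>" by blast
    then obtain T where "\<forall>\<psi>\<in>\<Gamma>0. team_sat T \<psi>" "\<not> team_sat T \<phi>"
      unfolding ptl_entails_def by blast
    with axiomatizes have "T \<in> countermodels \<Gamma> \<phi> m"
      by (simp add: countermodels_def)
    then show ?thesis by blast
  qed
  then obtain T where "\<forall>\<psi>\<in>\<Gamma>. team_sat T \<psi>" "\<not> team_sat T \<phi>"
    using countermodel_if_bounded_countermodels by blast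
  with assms show False
    unfolding ptl_entails_def by blast
qed

end
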